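(* Let $W\in L^2(\mathbb P;\mathcal G)$. If $W\in\overline{\mathsf L_{\mathcal G}\circ V}$, then there exists $\gamma\in\mathsf L_V(\mathcal H;\mathcal G)$ with $W=\gamma\circ V$ $\mathbb P$-a.s. If $W\in\overline{\mathsf A_{\mathcal G}\circ V}$, then there exists $\gamma\in\mathsf A_V(\mathcal H;\mathcal G)$ with $W=\gamma\circ V$ $\mathbb P$-a.s. In short, $\overline{\mathsf L_{\mathcal G}\circ V}\subseteq\mathsf L_V(\mathcal H;\mathcal G)\circ V$ and $\overline{\mathsf A_{\mathcal G}\circ V}\subseteq\mathsf A_V(\mathcal H;\mathcal G)\circ V$.
   Context: $(\Omega,\Sigma,\mathbb P)$ is a probability space, $\mathcal G,\mathcal H$ are separable real Hilbert spaces, and $L^2(\mathbb P;\mathcal G)$ denotes the Bochner space of square-integrable $\mathcal G$-valued random variables (modulo a.s. equality). Let $V\in L^2(\mathbb P;\mathcal H)$. Define: - $\mathsf L(\mathcal H;\mathcal G)$, the bounded linear operators $\mathcal H\to\mathcal G$; - $\mathsf A(\mathcal H;\mathcal G)$, the maps $h\mapsto b+Ah$ with $b\in\mathcal G$ and $A\in\mathsf L(\mathcal H;\mathcal G)$; - $\mathsf L_V(\mathcal H;\mathcal G)$, the (possibly unbounded) linear maps $\gamma:\mathcal H\to\mathcal G$ defined on all of $\mathcal H$ with $\gamma\circ V\in L^2(\mathbb P;\mathcal G)$; - $\mathsf A_V(\mathcal H;\mathcal G)$, the maps $h\mapsto b+Ah$ with $b\in\mathcal G$ and $A\in\mathsf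 L_V(\mathcal H;\mathcal G)$. $\overline{\mathsf L_{\mathcal G}\circ V}$ and $\overline{\mathsf A_{\mathcal G}\circ V}$ denote the closures in $L^2(\mathbb P;\mathcal G)$ of $\{\gamma\circ V:\gamma\in\mathsf L(\mathcal H;\mathcal G)\}$ and $\{\gamma\circ V:\gamma\in\mathsf A(\mathcal H;\mathcal G)\}$, respectively. *)

theory Defs
  imports "HOL-Probability.Probability"
begin

text \<open>Separable real Hilbert spaces are modelled by the type class
  real_inner + complete_space + second_countable_topology
  (for metric spaces, separable = second countable).\<close>

definition in_L2 :: "'s measure \<Rightarrow> ('s \<Rightarrow> 'a::{real_normed_vector, second_countable_topology}) \<Rightarrow> bool" where
  "in_L2 M f \<longleftrightarrow> (\<exists>g. g \<in> borel_measurable M \<and> integrable M (\<lambda>x. (norm (g x))\<^sup>2) \<and> (AE x in M. f x = g x))"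

definition L2_dist2 :: "'s measure \<Rightarrow> ('s \<Rightarrow> 'a::real_normed_vector) \<Rightarrow> ('s \<Rightarrow> 'a) \<Rightarrow> real" where
  "L2_dist2 M f g = (\<integral>x. (norm (f x - g x))\<^sup>2 \<partial>M)"

definition in_closure_L :: "'s measure \<Rightarrow> ('s \<Rightarrow> 'h::real_normed_vector) \<Rightarrow> ('s \<Rightarrow> 'g::real_normed_vector) \<Rightarrow> bool" where
  "in_closure_L M V W \<longleftrightarrow>
     (\<exists>A :: nat \<Rightarrow> 'h \<Rightarrow> 'g. (\<forall>n. bounded_linear (A n)) \<and>
        (\<lambda>n. L2_dist2 M (\<lambda>x. A n (V x)) W) \<longlonglongrightarrow> 0)"

definition in_closure_A :: "'s measure \<Rightarrow> ('s \<Rightarrow> 'h::real_normed_vector) \<Rightarrow> ('s \<Rightarrow> 'g::real_normed_vector) \<Rightarrow> bool" where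
  "in_closure_A M V W \<longleftrightarrow>
     (\<exists>(b :: nat \<Rightarrow> 'g) (A :: nat \<Rightarrow> 'h \<Rightarrow> 'g). (\<forall>n. bounded_linear (A n)) \<and>
        (\<lambda>n. L2_dist2 M (\<lambda>x. b n + A n (V x)) W) \<longlonglongrightarrow> 0)"

text \<open>L_V(H;G): everywhere-defined (possibly unbounded) linear maps with gamma o V in L^2.\<close>
definition L_V :: "'s measure \<Rightarrow> ('s \<Rightarrow> 'h::real_vector) \<Rightarrow> ('h \<Rightarrow> 'g::{real_normed_vector, second_countable_topology}) set" where
  "L_V M V = {\<gamma>. linear \<gamma> \<and> in_L2 M (\<lambda>x. \<gamma> (V x))}"

definition A_V :: "'s measure \<Rightarrow> ('s \<Rightarrow> 'h::real_vector) \<Rightarrow> ('h \<Rightarrow> 'g::{real_normed_vector, second_countable_topology}) set" where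
  "A_V M V = {\<gamma>. \<exists>b A. A \<in> L_V M V \<and> \<gamma> = (\<lambda>h. b + A h)}"

end

theory Submission imports Defs begin

text \<open>An L^2-convergent sequence has an almost everywhere convergent subsequence. Along it the
  bounded linear maps converge pointwise on a linear subspace containing almost every value of V,
  and the limit is linear there; extending it linearly from a Hamel basis of that subspace gives a
  possibly unbounded linear map on the whole space. The affine case is the linear case for the
  homogenised variable (V, 1) with values in H \<times> \<real>.\<close>

lemma ex_linear_extends_pointwise_limit:
  fixes f :: "nat \<Rightarrow> 'a::real_vector \<Rightarrow> 'b::real_normed_vector"
  assumes lin: "\<And>n. linear (f n)"
  obtains g where "linear g" "\<And>h. convergent (\<lambda>n. f n h) \<Longrightarrow> (\<lambda>n. f n h) \<longlonglongrightarrow> g h"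
proof -
  obtain B where B: "B \<subseteq> {h. convergent (\<lambda>n. f n h)}" "independent B"
      "{h. convergent (\<lambda>n. f n h)} \<subseteq> span B"
    by (rule maximal_independent_subset)
  obtain g where g: "linear g" "\<forall>x\<in>B. g x = lim (\<lambda>n. f n x)"
    using linear_independent_extend[OF B(2), of "\<lambda>x. lim (\<lambda>n. f n x)"] by blast
  have lim_on_span: "(\<lambda>n. f n h) \<longlonglongrightarrow> g h" if "h \<in> span B" for h
    using that
  proof (induction rule: span_induct_alt)
    case base
    show ?case by (simp add: linear_0[OF lin] linear_0[OF g(1)])
  next
    case (step c x y)
    have "(\<lambda>n. f n x) \<longlonglongrightarrow> g x"
      using step.hyps(1) B(1) g(2) by (auto simp: convergent_LIMSEQ_iff)
    then have "(\<lambda>n. c *\<^sub>R f n x + f n y) \<longlonglongrightarrow> c *\<^sub>R g x + g y"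
      by (intro tendsto_add tendsto_scaleR tendsto_const step.IH)
    then show ?case
      by (simp add: linear_add[OF lin] linear_scale[OF lin] linear_add[OF g(1)] linear_scale[OF g(1)])
  qed
  show thesis
  proof (rule that[OF g(1)])
    fix h assume "convergent (\<lambda>n. f n h)"
    with B(3) show "(\<lambda>n. f n h) \<longlonglongrightarrow> g h" by (blast intro: lim_on_span)
  qed
qed

lemma integrable_norm_diff_square:
  fixes f g :: "'s \<Rightarrow> 'a::{real_normed_vector, second_countable_topology}"
  assumes [measurable]: "f \<in> borel_measurable M" "g \<in> borel_measurable M"
    and "integrable M (\<lambda>x. (norm (f x))\<^sup>2)" "integrable M (\<lambda>x. (norm (g x))\<^sup>2)"
  shows "integrable M (\<lambda>x. (norm (f x - g x))\<^sup>2)"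
proof (rule Bochner_Integration.integrable_bound)
  show "integrable M (\<lambda>x. 2 * (norm (f x))\<^sup>2 + 2 * (norm (g x))\<^sup>2)"
    using assms(3,4) by simp
  show "AE x in M. norm ((norm (f x - g x))\<^sup>2) \<le> norm (2 * (norm (f x))\<^sup>2 + 2 * (norm (g x))\<^sup>2)"
  proof (intro AE_I2)
    fix x
    have "(norm (f x - g x))\<^sup>2 \<le> (norm (f x) + norm (g x))\<^sup>2"
      by (intro power_mono norm_triangle_ineq4) simp
    also have "\<dots> \<le> 2 * (norm (f x))\<^sup>2 + 2 * (norm (g x))\<^sup>2"
      using zero_le_power2[of "norm (f x) - norm (g x)"]
      unfolding power2_sum power2_diff by linarith
    finally show "norm ((norm (f x - g x))\<^sup>2) \<le> norm (2 * (norm (f x))\<^sup>2 + 2 * (norm (g x))\<^sup>2)"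
      by simp
  qed
qed measurable

lemma borel_measurable_bounded_linear_comp:
  assumes "bounded_linear A" "V \<in> borel_measurable M"
  shows "(\<lambda>x. A (V x)) \<in> borel_measurable M"
  using measurable_compose[OF assms(2) borel_measurable_continuous_onI[OF linear_continuous_on[OF assms(1)]]]
  by (simp add: o_def)

lemma integrable_norm_bounded_linear_square:
  fixes V :: "'s \<Rightarrow> 'h::{real_normed_vector, second_countable_topology}"
    and A :: "'h \<Rightarrow> 'g::{real_normed_vector, second_countable_topology}"
  assumes "bounded_linear A" "V \<in> borel_measurable M" "integrable M (\<lambda>x. (norm (V x))\<^sup>2)"
  shows "integrable M (\<lambda>x. (norm (A (V x)))\<^sup>2)"
proof -
  obtain K where K: "\<And>x. norm (A x) \<le> norm x * K"
    using bounded_linear.pos_bounded[OF assms(1)] by blast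
  show ?thesis
  proof (rule Bochner_Integration.integrable_bound)
    show "integrable M (\<lambda>x. K\<^sup>2 * (norm (V x))\<^sup>2)" using assms(3) by simp
    show "AE x in M. norm ((norm (A (V x)))\<^sup>2) \<le> norm (K\<^sup>2 * (norm (V x))\<^sup>2)"
    proof (intro AE_I2)
      fix x
      have "(norm (A (V x)))\<^sup>2 \<le> (norm (V x) * K)\<^sup>2"
        using K[of "V x"] by (intro power_mono) auto
      then show "norm ((norm (A (V x)))\<^sup>2) \<le> norm (K\<^sup>2 * (norm (V x))\<^sup>2)"
        by (simp add: power_mult_distrib mult.commute)
    qed
    show "(\<lambda>x. (norm (A (V x)))\<^sup>2) \<in> borel_measurable M"
      using borel_measurable_bounded_linear_comp[OF assms(1,2)] by measurable
  qed
qed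

lemma L2_dist2_tendsto_zero_imp_AE_subseq:
  fixes u :: "nat \<Rightarrow> 's \<Rightarrow> 'g::{real_normed_vector, second_countable_topology}"
  assumes "\<And>n. integrable M (\<lambda>x. (norm (u n x - W x))\<^sup>2)"
    and "(\<lambda>n. L2_dist2 M (u n) W) \<longlonglongrightarrow> 0"
  obtains r :: "nat \<Rightarrow> nat" where "strict_mono r" "AE x in M. (\<lambda>n. u (r n) x) \<longlonglongrightarrow> W x"
proof -
  have "(\<lambda>n. \<integral>x. norm ((norm (u n x - W x))\<^sup>2) \<partial>M) \<longlonglongrightarrow> 0"
    using assms(2) by (simp add: L2_dist2_def)
  from tendsto_L1_AE_subseq[OF assms(1) this] obtain r
    where r: "strict_mono r" "AE x in M. (\<lambda>n. (norm (u (r n) x - W x))\<^sup>2) \<longlonglongrightarrow> 0"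
    by blast
  have "(\<lambda>n. u (r n) x) \<longlonglongrightarrow> W x" if "(\<lambda>n. (norm (u (r n) x - W x))\<^sup>2) \<longlonglongrightarrow> 0" for x
  proof -
    have "(\<lambda>n. sqrt ((norm (u (r n) x - W x))\<^sup>2)) \<longlonglongrightarrow> sqrt 0"
      by (intro tendsto_real_sqrt that)
    then show ?thesis by (simp add: tendsto_norm_zero_iff LIM_zero_iff)
  qed
  with r show thesis by (intro that) auto
qed

lemma in_closure_L_imp_L_V:
  fixes V :: "'s \<Rightarrow> 'h::{real_normed_vector, second_countable_topology}"
    and W :: "'s \<Rightarrow> 'g::{real_normed_vector, second_countable_topology}"
  assumes V: "V \<in> borel_measurable M" "integrable M (\<lambda>x. (norm (V x))\<^sup>2)"
    and W: "W \<in> borel_measurable M" "integrable M (\<lambda>x. (norm (W x))\<^sup>2)"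
    and "in_closure_L M V W"
  shows "\<exists>\<gamma>\<in>L_V M V. AE x in M. W x = \<gamma> (V x)"
proof -
  obtain A where A: "\<And>n. bounded_linear (A n)"
      "(\<lambda>n. L2_dist2 M (\<lambda>x. A n (V x)) W) \<longlonglongrightarrow> 0"
    using assms(5) unfolding in_closure_L_def by blast
  have "integrable M (\<lambda>x. (norm (A n (V x) - W x))\<^sup>2)" for n
    using integrable_norm_diff_square[OF borel_measurable_bounded_linear_comp[OF A(1) V(1)] W(1)
        integrable_norm_bounded_linear_square[OF A(1) V] W(2)] .
  from L2_dist2_tendsto_zero_imp_AE_subseq[OF this A(2)]
  obtain r where r: "AE x in M. (\<lambda>n. A (r n) (V x)) \<longlonglongrightarrow> W x" by blast
  obtain g where g: "linear g" "\<And>h. convergent (\<lambda>n. A (r n) h) \<Longrightarrow> (\<lambda>n. A (r n) h) \<longlonglongrightarrow> g h"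
    using ex_linear_extends_pointwise_limit[of "\<lambda>n. A (r n)"] A(1) bounded_linear.linear by blast
  have ae: "AE x in M. g (V x) = W x"
    using r
  proof eventually_elim
    case (elim x)
    then have "(\<lambda>n. A (r n) (V x)) \<longlonglongrightarrow> g (V x)" by (intro g(2) convergentI)
    then show ?case using elim by (rule LIMSEQ_unique)
  qed
  then have "g \<in> L_V M V"
    unfolding L_V_def in_L2_def using g(1) W by (intro CollectI conjI exI[of _ W])
  moreover have "AE x in M. W x = g (V x)"
    using ae by (simp add: eq_commute)
  ultimately show ?thesis by blast
qed

lemma in_closure_A_imp_in_closure_L_Pair_one:
  "in_closure_A M V W \<Longrightarrow> in_closure_L M (\<lambda>x. (V x, 1::real)) W"
proof -
  assume "in_closure_A M V W"
  then obtain b A where A: "\<And>n. bounded_linear (A n)"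
      "(\<lambda>n. L2_dist2 M (\<lambda>x. b n + A n (V x)) W) \<longlonglongrightarrow> 0"
    unfolding in_closure_A_def by blast
  have "bounded_linear (\<lambda>(h, t). A n h + t *\<^sub>R b n)" for n
    unfolding case_prod_unfold
    by (intro bounded_linear_add bounded_linear_compose[OF A(1) bounded_linear_fst]
        bounded_linear_compose[OF bounded_linear_scaleR_left bounded_linear_snd])
  moreover have "L2_dist2 M (\<lambda>x. (\<lambda>(h, t). A n h + t *\<^sub>R b n) (V x, 1)) W
      = L2_dist2 M (\<lambda>x. b n + A n (V x)) W" for n
    by (simp add: add.commute)
  ultimately show ?thesis
    unfolding in_closure_L_def using A(2) by (intro exI[of _ "\<lambda>n (h, t). A n h + t *\<^sub>R b n"]) simp
qed

lemma in_closure_A_imp_A_V: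
  fixes V :: "'s \<Rightarrow> 'h::{real_normed_vector, second_countable_topology}"
    and W :: "'s \<Rightarrow> 'g::{real_normed_vector, second_countable_topology}"
  assumes "finite_measure M"
    and V: "V \<in> borel_measurable M" "integrable M (\<lambda>x. (norm (V x))\<^sup>2)"
    and W: "W \<in> borel_measurable M" "integrable M (\<lambda>x. (norm (W x))\<^sup>2)"
    and "in_closure_A M V W"
  shows "\<exists>\<gamma>\<in>A_V M V. AE x in M. W x = \<gamma> (V x)"
proof -
  note [measurable] = V(1) W(1)
  interpret finite_measure M by (rule assms(1))
  have "(\<lambda>x. (V x, 1::real)) \<in> borel_measurable M"
    by measurable
  moreover have "integrable M (\<lambda>x. (norm (V x, 1::real))\<^sup>2)"
    using V(2) by (simp add: norm_Pair)
  ultimately obtain \<gamma> where \<gamma>: "\<gamma> \<in> L_V M (\<lambda>x. (V x, 1::real))" "AE x in M. W x = \<gamma> (V x, 1)"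
    using in_closure_L_imp_L_V[OF _ _ W in_closure_A_imp_in_closure_L_Pair_one[OF assms(6)]]
    by blast
  have lin: "linear \<gamma>"
    using \<gamma>(1) by (simp add: L_V_def)
  define c where "c = \<gamma> (0, 1)"
  define B where "B h = \<gamma> (h, 0)" for h
  have split: "\<gamma> (h, 1) = c + B h" for h
    using linear_add[OF lin, of "(0, 1)" "(h, 0)"] by (simp add: c_def B_def)
  have ae_affine: "AE x in M. W x = c + B (V x)"
    using \<gamma>(2) by (simp add: split)
  have "linear B"
    using linear_compose[OF _ lin, of "\<lambda>h. (h, 0)"] by (simp add: B_def[abs_def] o_def linearI)
  moreover have "in_L2 M (\<lambda>x. B (V x))"
    unfolding in_L2_def
  proof (intro exI conjI)
    show "(\<lambda>x. W x - c) \<in> borel_measurable M" by measurable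
    show "integrable M (\<lambda>x. (norm (W x - c))\<^sup>2)"
      by (rule integrable_norm_diff_square) (simp_all add: W)
    show "AE x in M. B (V x) = W x - c"
      using ae_affine by eventually_elim simp
  qed
  ultimately have "B \<in> L_V M V"
    unfolding L_V_def by blast
  then have "(\<lambda>h. c + B h) \<in> A_V M V"
    unfolding A_V_def by blast
  with ae_affine show ?thesis by (auto intro!: bexI[where x = "\<lambda>h. c + B h"])
qed

theorem mainTheorem1:
  fixes M :: "'s measure"
    and V :: "'s \<Rightarrow> 'h::{real_inner, complete_space, second_countable_topology}"
    and W :: "'s \<Rightarrow> 'g::{real_inner, complete_space, second_countable_topology}"
  assumes "prob_space M"
    and "V \<in> borel_measurable M" and "integrable M (\<lambda>x. (norm (V x))\<^sup>2)"
    and "W \<in> borel_measurable M" and "integrable M (\<lambda>x. (norm (W x))\<^sup>2)"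
  shows "(in_closure_L M V W \<longrightarrow> (\<exists>\<gamma>\<in>L_V M V. AE x in M. W x = \<gamma> (V x)))
       \<and> (in_closure_A M V W \<longrightarrow> (\<exists>\<gamma>\<in>A_V M V. AE x in M. W x = \<gamma> (V x)))"
  using in_closure_L_imp_L_V[OF assms(2-5)]
    in_closure_A_imp_A_V[OF prob_space.finite_measure[OF assms(1)] assms(2-5)]
  by blast

end
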